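(* Let a motion digraph $\mathcal{M}=(\mathbb{Z}_\varkappa,\mathcal{W})$, an infection probability $\alpha\in[0,1]$ and a recovery probability $\beta\in[0,1]$ be given, and consider the agent-based SIR model with $N$ mobile agents described below. Then there exists a stochastic digraph $\boldsymbol{\mathcal{SIRM}}$ whose stochastic directed paths are in one-to-one correspondence with the trajectories of the agent-based SIR model with mobile agents.
   Context: Agent-based SIR model: agent $i\in\{1,\dots,N\}$ has state $(\sigma_i,\varpi_i)$ with $\sigma_i\in\{1,2,3\}$ (susceptible, infected, recovered) and position $\varpi_i\in\mathbb{Z}_\varkappa$. Positions evolve by $\varpi_i^+\in\mathcal{N}^o(\varpi_i)$, where $\mathcal{N}^o(\varpi)=\{y:(\varpi,y)\in\mathcal{W}\}$ is the out-neighborhood in $\mathcal{M}$ (the choice among out-neighbors is arbitrary, i.e., nondeterministic). Epidemic states evolve by $\sigma_i^+=G_i(\sigma,\varpi,u_i,v_i)$ with $G_i=1$ if $\sigma_i=1$ and there is no $j\neq i$ with $\varpi_i=\varpi_j$, $\sigma_j=2$ and $[u_i]_j=2$; $G_i=2$ if $\sigma_i=1$ and such a $j$ exists; $G_i=v_i+1$ if $\sigma_i=2$; $G_i=3$ if $\sigma_i=3$. Here $(\boldsymbol{u_i})_k\in\{1,2\}^N$ and $(\boldsymbol{v_i})_k\in\{1,2\}$, $i=1,\dots,N$, are sequences of i.i.d. random variables with $\mathbb{P}([(\boldsymbol{u_i})_k]_j=2)=\alpha$ for each $j$ and $\mathbb{P}((\boldsymbol{v_i})_k=2)=\beta$ (the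 infection events being independent). A stochastic digraph is a triple $(\mathbb{Z}_{n},\{\mathcal{E}_s\}_{s=1}^h,\mu)$ with $\mathcal{E}_s\subset\mathbb{Z}_n\times\mathbb{Z}_n$ and $\mu$ the common distribution of an i.i.d. sequence $\boldsymbol{w}_k:\Omega\to\mathbb{Z}_h$ on a probability space; with $H(x,w)=\{y:(x,y)\in\mathcal{E}_w\}$, a stochastic directed path from $x$ is a map $\omega\mapsto\{\boldsymbol{x}_k(\omega)\}_{k}$ with $\boldsymbol{x}_0=x$, $\boldsymbol{x}_{k+1}(\omega)\in H(\boldsymbol{x}_k(\omega),\boldsymbol{w}_k(\omega))$, and $\boldsymbol{x}_{k+1}$ measurable with respect to $\sigma(\boldsymbol{w}_0,\dots,\boldsymbol{w}_k)$. *)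

theory Defs
  imports "HOL-Probability.Probability"
begin

text \<open>Agents are indexed by 0..N-1, positions by Z_kappa = {0..<kappa}.
  A model state is a pair (sigma, varpi) of lists of length N, sigma entries in {1,2,3}.\<close>

definition sir_states :: "nat \<Rightarrow> nat \<Rightarrow> (nat list \<times> nat list) set" where
  "sir_states N \<kappa> = {(s, p). length s = N \<and> length p = N \<and> set s \<subseteq> {1,2,3} \<and> set p \<subseteq> {..<\<kappa>}}"

definition out_nbhd :: "(nat \<times> nat) set \<Rightarrow> nat \<Rightarrow> nat set" where
  "out_nbhd W x = {y. (x, y) \<in> W}"

definition sir_G :: "nat \<Rightarrow> nat list \<Rightarrow> nat list \<Rightarrow> (nat \<Rightarrow> nat) \<Rightarrow> nat \<Rightarrow> nat" where
  "sir_G i s p ui vi =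
     (if s ! i = 1 then
        (if \<exists>j<length s. j \<noteq> i \<and> p ! i = p ! j \<and> s ! j = 2 \<and> ui j = 2 then 2 else 1)
      else if s ! i = 2 then vi + 1
      else 3)"

text \<open>Noise random variables: u i k \<omega> j = [(u_i)_k]_j and v i k \<omega> = (v_i)_k, all mutually
  independent, with values in {1,2}, P([(u_i)_k]_j = 2) = alpha, P((v_i)_k = 2) = beta.\<close>
definition sir_noise_family ::
  "nat \<Rightarrow> (nat \<Rightarrow> nat \<Rightarrow> 'a \<Rightarrow> nat \<Rightarrow> nat) \<Rightarrow> (nat \<Rightarrow> nat \<Rightarrow> 'a \<Rightarrow> nat)
    \<Rightarrow> (nat \<times> nat \<times> nat) + (nat \<times> nat) \<Rightarrow> 'a \<Rightarrow> nat" where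
  "sir_noise_family N u v idx = (case idx of Inl (i, j, k) \<Rightarrow> (\<lambda>\<omega>. u i k \<omega> j)
                                           | Inr (i, k) \<Rightarrow> (\<lambda>\<omega>. v i k \<omega>))"

definition sir_noise_index :: "nat \<Rightarrow> ((nat \<times> nat \<times> nat) + (nat \<times> nat)) set" where
  "sir_noise_index N = {Inl (i, j, k) | i j k. i < N \<and> j < N} \<union> {Inr (i, k) | i k. i < N}"

definition sir_noise ::
  "'a measure \<Rightarrow> nat \<Rightarrow> real \<Rightarrow> real \<Rightarrow> (nat \<Rightarrow> nat \<Rightarrow> 'a \<Rightarrow> nat \<Rightarrow> nat) \<Rightarrow> (nat \<Rightarrow> nat \<Rightarrow> 'a \<Rightarrow> nat) \<Rightarrow> bool" where
  "sir_noise M N \<alpha> \<beta> u v \<longleftrightarrow>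
     prob_space M \<and>
     prob_space.indep_vars M (\<lambda>_. count_space UNIV) (sir_noise_family N u v) (sir_noise_index N) \<and>
     (\<forall>i<N. \<forall>j<N. \<forall>k. \<forall>\<omega>\<in>space M. u i k \<omega> j \<in> {1, 2}) \<and>
     (\<forall>i<N. \<forall>k. \<forall>\<omega>\<in>space M. v i k \<omega> \<in> {1, 2}) \<and>
     (\<forall>i<N. \<forall>j<N. \<forall>k. measure M {\<omega> \<in> space M. u i k \<omega> j = 2} = \<alpha>) \<and>
     (\<forall>i<N. \<forall>k. measure M {\<omega> \<in> space M. v i k \<omega> = 2} = \<beta>)"

definition sir_noise_at ::
  "nat \<Rightarrow> (nat \<Rightarrow> nat \<Rightarrow> 'a \<Rightarrow> nat \<Rightarrow> nat) \<Rightarrow> (nat \<Rightarrow> nat \<Rightarrow> 'a \<Rightarrow> nat) \<Rightarrow> nat \<Rightarrow> 'a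
     \<Rightarrow> nat list list \<times> nat list" where
  "sir_noise_at N u v k \<omega> =
     (map (\<lambda>i. map (\<lambda>j. u i k \<omega> j) [0..<N]) [0..<N], map (\<lambda>i. v i k \<omega>) [0..<N])"

definition noise_vals :: "nat \<Rightarrow> (nat list list \<times> nat list) set" where
  "noise_vals N = {(U, V). length U = N \<and> (\<forall>r\<in>set U. length r = N \<and> set r \<subseteq> {1, 2})
                           \<and> length V = N \<and> set V \<subseteq> {1, 2}}"

text \<open>Values outside space M are fixed to undefined (extensionality).\<close>
definition sir_traj ::
  "'a measure \<Rightarrow> nat \<Rightarrow> (nat \<times> nat) set \<Rightarrow> (nat \<Rightarrow> nat \<Rightarrow> 'a \<Rightarrow> nat \<Rightarrow> nat) \<Rightarrow> (nat \<Rightarrow> nat \<Rightarrow> 'a \<Rightarrow> nat)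
     \<Rightarrow> nat list \<times> nat list \<Rightarrow> (nat \<Rightarrow> 'a \<Rightarrow> nat list \<times> nat list) set" where
  "sir_traj M N W u v x =
     {X. (\<forall>\<omega>\<in>space M. X 0 \<omega> = x) \<and>
         (\<forall>k. \<forall>\<omega>\<in>space M.
            length (fst (X (Suc k) \<omega>)) = N \<and> length (snd (X (Suc k) \<omega>)) = N \<and>
            (\<forall>i<N. snd (X (Suc k) \<omega>) ! i \<in> out_nbhd W (snd (X k \<omega>) ! i) \<and>
                   fst (X (Suc k) \<omega>) ! i =
                     sir_G i (fst (X k \<omega>)) (snd (X k \<omega>)) (u i k \<omega>) (v i k \<omega>))) \<and>
         (\<forall>k. X (Suc k) \<in> measurable
                (vimage_algebra (space M) (\<lambda>\<omega>. map (\<lambda>j. sir_noise_at N u v j \<omega>) [0..<Suc k])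
                   (count_space UNIV))
                (count_space UNIV)) \<and>
         (\<forall>k. \<forall>\<omega>. \<omega> \<notin> space M \<longrightarrow> X k \<omega> = undefined)}"

text \<open>Stochastic digraph (Z_n, {E_s}_{s in Z_h}, mu) with i.i.d. driving sequence w_k : Omega \<rightarrow> Z_h
  of common distribution mu (given by its mass function).\<close>
definition stoch_digraph ::
  "'a measure \<Rightarrow> nat \<Rightarrow> nat \<Rightarrow> (nat \<Rightarrow> (nat \<times> nat) set) \<Rightarrow> (nat \<Rightarrow> real) \<Rightarrow> (nat \<Rightarrow> 'a \<Rightarrow> nat) \<Rightarrow> bool" where
  "stoch_digraph M n h E \<mu> w \<longleftrightarrow>
     prob_space M \<and>
     (\<forall>s<h. E s \<subseteq> {..<n} \<times> {..<n}) \<and>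
     (\<forall>k. \<forall>\<omega>\<in>space M. w k \<omega> < h) \<and>
     prob_space.indep_vars M (\<lambda>_. count_space UNIV) w UNIV \<and>
     (\<forall>k s. measure M {\<omega> \<in> space M. w k \<omega> = s} = \<mu> s)"

definition sd_paths ::
  "'a measure \<Rightarrow> (nat \<Rightarrow> (nat \<times> nat) set) \<Rightarrow> (nat \<Rightarrow> 'a \<Rightarrow> nat) \<Rightarrow> nat \<Rightarrow> (nat \<Rightarrow> 'a \<Rightarrow> nat) set" where
  "sd_paths M E w x =
     {X. (\<forall>\<omega>\<in>space M. X 0 \<omega> = x) \<and>
         (\<forall>k. \<forall>\<omega>\<in>space M. (X k \<omega>, X (Suc k) \<omega>) \<in> E (w k \<omega>)) \<and>
         (\<forall>k. X (Suc k) \<in> measurable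
                (vimage_algebra (space M) (\<lambda>\<omega>. map (\<lambda>j. w j \<omega>) [0..<Suc k]) (count_space UNIV))
                (count_space UNIV)) \<and>
         (\<forall>k. \<forall>\<omega>. \<omega> \<notin> space M \<longrightarrow> X k \<omega> = undefined)}"

end

theory Submission
  imports Defs
begin

(* The noise of one time step, ([u_i]_j)_{i,j<N} together with (v_i)_{i<N}, is a finite object, and
   its code w_k in nat is an i.i.d. sequence: the noise blocks of distinct times are disjoint
   subfamilies of an independent family, and the law of each coordinate does not depend on time.
   Number the finite state space by enc and let E_s join enc x to enc y whenever the model can step
   from x to y under the noise with code s. Since the code is injective, a model step under the
   noise at time k is exactly an edge of E_{w_k}, and the noise history generates the same
   sigma-algebra as its code history; hence encoding states maps trajectories bijectively onto
   stochastic directed paths. *)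

lemma sets_vimage_algebra_inj_comp:
  assumes "inj h"
  shows "sets (vimage_algebra \<Omega> (\<lambda>\<omega>. h (F \<omega>)) (count_space UNIV))
       = sets (vimage_algebra \<Omega> F (count_space UNIV))"
proof -
  let ?hF = "\<lambda>\<omega>. h (F \<omega>)"
  have "{?hF -` A \<inter> \<Omega> | A. A \<in> sets (count_space UNIV)}
      = {F -` B \<inter> \<Omega> | B. B \<in> sets (count_space UNIV)}"
  proof (intro equalityI subsetI)
    fix X assume "X \<in> {?hF -` A \<inter> \<Omega> | A. A \<in> sets (count_space UNIV)}"
    then obtain A where "X = F -` (h -` A) \<inter> \<Omega>" by blast
    then show "X \<in> {F -` B \<inter> \<Omega> | B. B \<in> sets (count_space UNIV)}"
      by (intro CollectI exI[of _ "h -` A"]) simp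
  next
    fix X assume "X \<in> {F -` B \<inter> \<Omega> | B. B \<in> sets (count_space UNIV)}"
    then obtain B where "X = F -` B \<inter> \<Omega>" by blast
    also have "\<dots> = ?hF -` (h ` B) \<inter> \<Omega>"
      using assms by (auto dest: injD)
    finally show "X \<in> {?hF -` A \<inter> \<Omega> | A. A \<in> sets (count_space UNIV)}"
      by (intro CollectI exI[of _ "h ` B"]) simp
  qed
  then show ?thesis
    by (simp add: sets_vimage_algebra2)
qed

lemma measurable_count_space_if_comp:
  assumes "f \<in> measurable A (count_space UNIV)" and "space A = \<Omega>"
  shows "(\<lambda>\<omega>. if \<omega> \<in> \<Omega> then g (f \<omega>) else undefined) \<in> measurable A (count_space UNIV)"
  using measurable_compose[OF assms(1) measurable_count_space]
  by (rule measurable_cong[THEN iffD1, rotated]) (simp add: assms(2))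

definition driven_traj ::
  "'a measure \<Rightarrow> ('z \<Rightarrow> 's \<Rightarrow> 's \<Rightarrow> bool) \<Rightarrow> (nat \<Rightarrow> 'a \<Rightarrow> 'z) \<Rightarrow> 's \<Rightarrow> (nat \<Rightarrow> 'a \<Rightarrow> 's) set" where
  "driven_traj M R Z x =
     {X. (\<forall>\<omega>\<in>space M. X 0 \<omega> = x) \<and>
         (\<forall>k. \<forall>\<omega>\<in>space M. R (Z k \<omega>) (X k \<omega>) (X (Suc k) \<omega>)) \<and>
         (\<forall>k. X (Suc k) \<in> measurable
                (vimage_algebra (space M) (\<lambda>\<omega>. map (\<lambda>j. Z j \<omega>) [0..<Suc k]) (count_space UNIV))
                (count_space UNIV)) \<and>
         (\<forall>k. \<forall>\<omega>. \<omega> \<notin> space M \<longrightarrow> X k \<omega> = undefined)}"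

lemma sd_paths_eq_driven_traj: "sd_paths M E w x = driven_traj M (\<lambda>s a b. (a, b) \<in> E s) w x"
  by (simp add: sd_paths_def driven_traj_def)

definition driven_edges ::
  "'s set \<Rightarrow> ('s \<Rightarrow> nat) \<Rightarrow> ('z \<Rightarrow> nat) \<Rightarrow> ('z \<Rightarrow> 's \<Rightarrow> 's \<Rightarrow> bool) \<Rightarrow> nat \<Rightarrow> (nat \<times> nat) set" where
  "driven_edges S enc c R s = {(enc x, enc y) | x y z. x \<in> S \<and> y \<in> S \<and> c z = s \<and> R z x y}"

locale coded_driven_system =
  fixes M :: "'a measure" and S :: "'s set" and enc :: "'s \<Rightarrow> nat"
    and c :: "'z \<Rightarrow> nat" and R :: "'z \<Rightarrow> 's \<Rightarrow> 's \<Rightarrow> bool" and Z :: "nat \<Rightarrow> 'a \<Rightarrow> 'z"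
  assumes inj_c: "inj c"
    and inj_on_enc: "inj_on enc S"
    and R_closed: "\<lbrakk>\<omega> \<in> space M; a \<in> S; R (Z k \<omega>) a b\<rbrakk> \<Longrightarrow> b \<in> S"
begin

abbreviation coded_traj :: "'s \<Rightarrow> (nat \<Rightarrow> 'a \<Rightarrow> nat) set" where
  "coded_traj x \<equiv> driven_traj M (\<lambda>s a b. (a, b) \<in> driven_edges S enc c R s) (\<lambda>k \<omega>. c (Z k \<omega>)) (enc x)"

definition encode :: "(nat \<Rightarrow> 'a \<Rightarrow> 's) \<Rightarrow> nat \<Rightarrow> 'a \<Rightarrow> nat" where
  "encode X = (\<lambda>k \<omega>. if \<omega> \<in> space M then enc (X k \<omega>) else undefined)"

definition decode :: "(nat \<Rightarrow> 'a \<Rightarrow> nat) \<Rightarrow> nat \<Rightarrow> 'a \<Rightarrow> 's" where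
  "decode Y = (\<lambda>k \<omega>. if \<omega> \<in> space M then the_inv_into S enc (Y k \<omega>) else undefined)"

lemma measurable_code_history_iff:
  "f \<in> measurable (vimage_algebra (space M) (\<lambda>\<omega>. map (\<lambda>j. c (Z j \<omega>)) js) (count_space UNIV)) N \<longleftrightarrow>
   f \<in> measurable (vimage_algebra (space M) (\<lambda>\<omega>. map (\<lambda>j. Z j \<omega>) js) (count_space UNIV)) N"
proof -
  have "sets (vimage_algebra (space M) (\<lambda>\<omega>. map (\<lambda>j. c (Z j \<omega>)) js) (count_space UNIV))
      = sets (vimage_algebra (space M) (\<lambda>\<omega>. map (\<lambda>j. Z j \<omega>) js) (count_space UNIV))"
    using sets_vimage_algebra_inj_comp[of "map c" "space M" "\<lambda>\<omega>. map (\<lambda>j. Z j \<omega>) js"] inj_c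
    by (simp add: o_def)
  then have "measurable (vimage_algebra (space M) (\<lambda>\<omega>. map (\<lambda>j. c (Z j \<omega>)) js) (count_space UNIV)) N
      = measurable (vimage_algebra (space M) (\<lambda>\<omega>. map (\<lambda>j. Z j \<omega>) js) (count_space UNIV)) N"
    by (rule measurable_cong_sets) simp
  then show ?thesis
    by simp
qed

lemma driven_traj_in_states:
  assumes "X \<in> driven_traj M R Z x" and "x \<in> S" and "\<omega> \<in> space M"
  shows "X k \<omega> \<in> S"
  using assms by (induction k) (auto simp: driven_traj_def intro: R_closed)

lemma coded_traj_in_image:
  assumes "Y \<in> coded_traj x" and "x \<in> S" and "\<omega> \<in> space M"
  shows "Y k \<omega> \<in> enc ` S"
proof (cases k)
  case 0
  then show ?thesis using assms by (simp add: driven_traj_def)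
next
  case (Suc m)
  have "(Y m \<omega>, Y (Suc m) \<omega>) \<in> driven_edges S enc c R (c (Z m \<omega>))"
    using assms by (simp add: driven_traj_def)
  then show ?thesis unfolding Suc driven_edges_def by blast
qed

lemma encode_in_coded_traj:
  assumes X: "X \<in> driven_traj M R Z x" and x: "x \<in> S"
  shows "encode X \<in> coded_traj x"
  unfolding driven_traj_def
proof (intro CollectI conjI allI ballI impI)
  fix \<omega> assume "\<omega> \<in> space M"
  then show "encode X 0 \<omega> = enc x"
    using X by (simp add: encode_def driven_traj_def)
next
  fix k \<omega> assume \<omega>: "\<omega> \<in> space M"
  then have "X k \<omega> \<in> S" "X (Suc k) \<omega> \<in> S" "R (Z k \<omega>) (X k \<omega>) (X (Suc k) \<omega>)"
    using driven_traj_in_states[OF X x] X by (auto simp: driven_traj_def)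
  then show "(encode X k \<omega>, encode X (Suc k) \<omega>) \<in> driven_edges S enc c R (c (Z k \<omega>))"
    using \<omega> unfolding encode_def driven_edges_def by auto
next
  fix k
  have "X (Suc k) \<in> measurable
      (vimage_algebra (space M) (\<lambda>\<omega>. map (\<lambda>j. Z j \<omega>) [0..<Suc k]) (count_space UNIV)) (count_space UNIV)"
    using X by (simp add: driven_traj_def)
  then show "encode X (Suc k) \<in> measurable
      (vimage_algebra (space M) (\<lambda>\<omega>. map (\<lambda>j. c (Z j \<omega>)) [0..<Suc k]) (count_space UNIV)) (count_space UNIV)"
    unfolding measurable_code_history_iff encode_def by (rule measurable_count_space_if_comp) simp
next
  fix k \<omega> assume "\<omega> \<notin> space M"
  then show "encode X k \<omega> = undefined" by (simp add: encode_def)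
qed

lemma decode_in_driven_traj:
  assumes Y: "Y \<in> coded_traj x" and x: "x \<in> S"
  shows "decode Y \<in> driven_traj M R Z x"
  unfolding driven_traj_def
proof (intro CollectI conjI allI ballI impI)
  fix \<omega> assume "\<omega> \<in> space M"
  then show "decode Y 0 \<omega> = x"
    using Y x inj_on_enc by (simp add: decode_def driven_traj_def the_inv_into_f_f)
next
  fix k \<omega> assume \<omega>: "\<omega> \<in> space M"
  then have "(Y k \<omega>, Y (Suc k) \<omega>) \<in> driven_edges S enc c R (c (Z k \<omega>))"
    using Y by (simp add: driven_traj_def)
  then obtain a b z where "Y k \<omega> = enc a" "Y (Suc k) \<omega> = enc b" "a \<in> S" "b \<in> S"
    and "c z = c (Z k \<omega>)" and "R z a b"
    unfolding driven_edges_def by blast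
  moreover from \<open>c z = c (Z k \<omega>)\<close> have "z = Z k \<omega>"
    using inj_c by (simp add: inj_eq)
  ultimately show "R (Z k \<omega>) (decode Y k \<omega>) (decode Y (Suc k) \<omega>)"
    using \<omega> inj_on_enc by (simp add: decode_def the_inv_into_f_f)
next
  fix k
  have "Y (Suc k) \<in> measurable
      (vimage_algebra (space M) (\<lambda>\<omega>. map (\<lambda>j. c (Z j \<omega>)) [0..<Suc k]) (count_space UNIV)) (count_space UNIV)"
    using Y by (simp add: driven_traj_def)
  then show "decode Y (Suc k) \<in> measurable
      (vimage_algebra (space M) (\<lambda>\<omega>. map (\<lambda>j. Z j \<omega>) [0..<Suc k]) (count_space UNIV)) (count_space UNIV)"
    unfolding measurable_code_history_iff[symmetric] decode_def
    by (rule measurable_count_space_if_comp) simp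
next
  fix k \<omega> assume "\<omega> \<notin> space M"
  then show "decode Y k \<omega> = undefined" by (simp add: decode_def)
qed

lemma bij_betw_encode:
  assumes "x \<in> S"
  shows "bij_betw encode (driven_traj M R Z x) (coded_traj x)"
proof (rule bij_betw_byWitness[where f' = decode])
  show "\<forall>X\<in>driven_traj M R Z x. decode (encode X) = X"
  proof (intro ballI ext)
    fix X k \<omega> assume X: "X \<in> driven_traj M R Z x"
    show "decode (encode X) k \<omega> = X k \<omega>"
    proof (cases "\<omega> \<in> space M")
      case True
      then show ?thesis
        using driven_traj_in_states[OF X assms True] inj_on_enc
        by (simp add: decode_def encode_def the_inv_into_f_f)
    next
      case False
      then show ?thesis
        using X by (simp add: decode_def driven_traj_def)
    qed
  qed
  show "\<forall>Y\<in>coded_traj x. encode (decode Y) = Y"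
  proof (intro ballI ext)
    fix Y k \<omega> assume Y: "Y \<in> coded_traj x"
    show "encode (decode Y) k \<omega> = Y k \<omega>"
    proof (cases "\<omega> \<in> space M")
      case True
      then show ?thesis
        using coded_traj_in_image[OF Y assms True] inj_on_enc
        by (simp add: decode_def encode_def f_the_inv_into_f)
    next
      case False
      then show ?thesis
        using Y by (simp add: encode_def driven_traj_def)
    qed
  qed
  show "encode ` driven_traj M R Z x \<subseteq> coded_traj x"
    using assms encode_in_coded_traj by blast
  show "decode ` coded_traj x \<subseteq> driven_traj M R Z x"
    using assms decode_in_driven_traj by blast
qed

end

definition sir_step ::
  "(nat \<times> nat) set \<Rightarrow> nat \<Rightarrow> nat list list \<times> nat list \<Rightarrow> nat list \<times> nat list \<Rightarrow> nat list \<times> nat list \<Rightarrow> bool" where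
  "sir_step W N z x y \<longleftrightarrow> length (fst y) = N \<and> length (snd y) = N \<and>
     (\<forall>i<N. snd y ! i \<in> out_nbhd W (snd x ! i) \<and>
            fst y ! i = sir_G i (fst x) (snd x) (\<lambda>j. fst z ! i ! j) (snd z ! i))"

lemma sir_G_cong:
  assumes "\<forall>j<length s. ui j = ui' j"
  shows "sir_G i s p ui vi = sir_G i s p ui' vi"
  using assms by (auto simp: sir_G_def)

lemma sir_G_mem: "vi \<in> {1, 2} \<Longrightarrow> sir_G i s p ui vi \<in> {1, 2, 3}"
  by (auto simp: sir_G_def)

lemma sir_step_sir_noise_at_iff:
  assumes "length (fst x) = N"
  shows "sir_step W N (sir_noise_at N u v k \<omega>) x y \<longleftrightarrow>
           length (fst y) = N \<and> length (snd y) = N \<and>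
           (\<forall>i<N. snd y ! i \<in> out_nbhd W (snd x ! i) \<and>
                  fst y ! i = sir_G i (fst x) (snd x) (u i k \<omega>) (v i k \<omega>))"
proof -
  have "sir_G i (fst x) (snd x) (\<lambda>j. fst (sir_noise_at N u v k \<omega>) ! i ! j) (snd (sir_noise_at N u v k \<omega>) ! i)
      = sir_G i (fst x) (snd x) (u i k \<omega>) (v i k \<omega>)" if "i < N" for i
    using that assms by (simp add: sir_noise_at_def) (rule sir_G_cong, simp)
  then show ?thesis
    unfolding sir_step_def by auto
qed

lemma sir_noise_at_in_noise_vals:
  assumes "sir_noise M N \<alpha> \<beta> u v" and "\<omega> \<in> space M"
  shows "sir_noise_at N u v k \<omega> \<in> noise_vals N"
proof -
  have "u i k \<omega> j \<in> {1, 2}" if "i < N" "j < N" for i j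
    using assms that by (simp add: sir_noise_def)
  moreover have "v i k \<omega> \<in> {1, 2}" if "i < N" for i
    using assms that by (simp add: sir_noise_def)
  ultimately show ?thesis
    by (fastforce simp: sir_noise_at_def noise_vals_def)
qed

lemma sir_step_in_sir_states:
  assumes "W \<subseteq> {..<\<kappa>} \<times> {..<\<kappa>}" and z: "z \<in> noise_vals N" and step: "sir_step W N z x y"
  shows "y \<in> sir_states N \<kappa>"
proof -
  have "\<forall>i<N. fst y ! i \<in> {1, 2, 3} \<and> snd y ! i \<in> {..<\<kappa>}"
  proof (intro allI impI conjI)
    fix i assume "i < N"
    have "set (snd z) \<subseteq> {1, 2}" and "i < length (snd z)"
      using z \<open>i < N\<close> by (auto simp: noise_vals_def split: prod.splits)
    then have "snd z ! i \<in> {1, 2}"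
      by (meson nth_mem subsetD)
    then show "fst y ! i \<in> {1, 2, 3}"
      using step \<open>i < N\<close> sir_G_mem unfolding sir_step_def by metis
    show "snd y ! i \<in> {..<\<kappa>}"
      using assms(1) step \<open>i < N\<close> unfolding sir_step_def out_nbhd_def by auto
  qed
  moreover have "length (fst y) = N" and "length (snd y) = N"
    using step by (simp_all add: sir_step_def)
  ultimately show ?thesis
    by (cases y) (simp add: sir_states_def subset_eq all_set_conv_all_nth)
qed

lemma sir_traj_eq_driven_traj:
  assumes x: "x \<in> sir_states N \<kappa>"
  shows "sir_traj M N W u v x = driven_traj M (sir_step W N) (sir_noise_at N u v) x"
proof (intro set_eqI iffI)
  fix X assume X: "X \<in> sir_traj M N W u v x"
  have "sir_step W N (sir_noise_at N u v k \<omega>) (X k \<omega>) (X (Suc k) \<omega>)" if "\<omega> \<in> space M" for k \<omega>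
  proof -
    have "length (fst (X k \<omega>)) = N"
      using X x that by (cases k) (auto simp: sir_traj_def sir_states_def)
    then show ?thesis
      using X that by (simp add: sir_step_sir_noise_at_iff sir_traj_def)
  qed
  then show "X \<in> driven_traj M (sir_step W N) (sir_noise_at N u v) x"
    using X by (simp add: sir_traj_def driven_traj_def)
next
  fix X assume X: "X \<in> driven_traj M (sir_step W N) (sir_noise_at N u v) x"
  have "length (fst (X k \<omega>)) = N" if "\<omega> \<in> space M" for k \<omega>
    using X x that by (cases k) (auto simp: driven_traj_def sir_states_def sir_step_def)
  then show "X \<in> sir_traj M N W u v x"
    using X by (simp add: sir_traj_def driven_traj_def sir_step_sir_noise_at_iff)
qed

lemma finite_sir_states: "finite (sir_states N \<kappa>)"
proof (rule finite_subset)
  show "sir_states N \<kappa> \<subseteq> {s. set s \<subseteq> {1, 2, 3} \<and> length s = N} \<times> {p. set p \<subseteq> {..<\<kappa>} \<and> length p = N}"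
    by (auto simp: sir_states_def)
qed (intro finite_cartesian_product finite_lists_length_eq; simp)+

lemma finite_noise_vals: "finite (noise_vals N)"
proof (rule finite_subset)
  let ?R = "{r. set r \<subseteq> {1::nat, 2} \<and> length r = N}"
  show "noise_vals N \<subseteq> {U. set U \<subseteq> ?R \<and> length U = N} \<times> {V. set V \<subseteq> {1, 2} \<and> length V = N}"
    by (auto simp: noise_vals_def)
  show "finite ({U. set U \<subseteq> ?R \<and> length U = N} \<times> {V. set V \<subseteq> {1::nat, 2} \<and> length V = N})"
    by (intro finite_cartesian_product finite_lists_length_eq) auto
qed

definition two_point_mass :: "real \<Rightarrow> nat \<Rightarrow> real" where
  "two_point_mass p c = (if c = 2 then p else 1 - p)"

lemma (in prob_space) prob_eq_two_point_mass:
  assumes X: "random_variable (count_space UNIV) X"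
    and vals: "\<forall>\<omega>\<in>space M. X \<omega> \<in> {1, 2}"
    and p: "prob {\<omega> \<in> space M. X \<omega> = 2} = p"
    and c: "c \<in> {1, 2}"
  shows "prob {\<omega> \<in> space M. X \<omega> = c} = two_point_mass p c"
proof (cases "c = 2")
  case True
  then show ?thesis using p by (simp add: two_point_mass_def)
next
  case False
  then have "{\<omega> \<in> space M. X \<omega> = c} = space M - {\<omega> \<in> space M. X \<omega> = 2}"
    using vals c by auto
  moreover have "{\<omega> \<in> space M. X \<omega> = 2} \<in> events"
    using measurable_sets[OF X, of "{2}"] by (simp add: vimage_def Int_def conj_commute)
  ultimately show ?thesis
    using False p by (simp add: prob_compl two_point_mass_def)
qed

definition noise_block :: "nat \<Rightarrow> nat \<Rightarrow> ((nat \<times> nat \<times> nat) + (nat \<times> nat)) set" where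
  "noise_block N k = {Inl (i, j, k) | i j. i < N \<and> j < N} \<union> {Inr (i, k) | i. i < N}"

definition noise_coord :: "nat list list \<times> nat list \<Rightarrow> (nat \<times> nat \<times> nat) + (nat \<times> nat) \<Rightarrow> nat" where
  "noise_coord z idx = (case idx of Inl (i, j, _) \<Rightarrow> fst z ! i ! j | Inr (i, _) \<Rightarrow> snd z ! i)"

definition noise_param :: "real \<Rightarrow> real \<Rightarrow> (nat \<times> nat \<times> nat) + (nat \<times> nat) \<Rightarrow> real" where
  "noise_param \<alpha> \<beta> idx = (case idx of Inl _ \<Rightarrow> \<alpha> | Inr _ \<Rightarrow> \<beta>)"

lemma mem_noise_block [simp]:
  "Inl (i, j, t) \<in> noise_block N k \<longleftrightarrow> i < N \<and> j < N \<and> t = k"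
  "Inr (i, t) \<in> noise_block N k \<longleftrightarrow> i < N \<and> t = k"
  by (auto simp: noise_block_def)

lemma noise_block_subset: "noise_block N k \<subseteq> sir_noise_index N"
  by (auto simp: noise_block_def sir_noise_index_def)

lemma finite_noise_block: "finite (noise_block N k)"
proof (rule finite_subset)
  show "noise_block N k \<subseteq> Inl ` ({..<N} \<times> {..<N} \<times> {k}) \<union> Inr ` ({..<N} \<times> {k})"
    by (auto simp: noise_block_def)
qed simp

lemma noise_coord_mem:
  assumes "z \<in> noise_vals N" and "idx \<in> noise_block N k"
  shows "noise_coord z idx \<in> {1, 2}"
proof -
  obtain U V where z: "z = (U, V)" by (cases z)
  consider (u) i j where "idx = Inl (i, j, k)" "i < N" "j < N" | (v) i where "idx = Inr (i, k)" "i < N"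
    using assms(2) by (auto simp: noise_block_def)
  then show ?thesis
  proof cases
    case u
    then have "U ! i \<in> set U" using assms(1) z by (simp add: noise_vals_def)
    then have "set (U ! i) \<subseteq> {1, 2}" and "j < length (U ! i)"
      using assms(1) z u by (auto simp: noise_vals_def)
    then have "U ! i ! j \<in> {1, 2}"
      by (meson nth_mem subsetD)
    then show ?thesis
      using u z by (simp add: noise_coord_def)
  next
    case v
    then have "set V \<subseteq> {1, 2}" and "i < length V"
      using assms(1) z by (auto simp: noise_vals_def)
    then have "V ! i \<in> {1, 2}"
      by (meson nth_mem subsetD)
    then show ?thesis
      using v z by (simp add: noise_coord_def)
  qed
qed

lemma measure_sir_noise_family:
  assumes noise: "sir_noise M N \<alpha> \<beta> u v" and idx: "idx \<in> sir_noise_index N" and c: "c \<in> {1, 2}"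
  shows "measure M {\<omega> \<in> space M. sir_noise_family N u v idx \<omega> = c} = two_point_mass (noise_param \<alpha> \<beta> idx) c"
proof -
  interpret prob_space M
    using noise by (simp add: sir_noise_def)
  have "random_variable (count_space UNIV) (sir_noise_family N u v idx)"
    using noise idx by (simp add: sir_noise_def indep_vars_def)
  moreover have "\<forall>\<omega>\<in>space M. sir_noise_family N u v idx \<omega> \<in> {1, 2}"
    and "prob {\<omega> \<in> space M. sir_noise_family N u v idx \<omega> = 2} = noise_param \<alpha> \<beta> idx"
    using idx noise unfolding sir_noise_index_def
    by (elim UnE CollectE exE conjE; simp add: sir_noise_def sir_noise_family_def noise_param_def)+
  ultimately show ?thesis
    using c by (rule prob_eq_two_point_mass)
qed

lemma ball_noise_block:
  "(\<forall>idx\<in>noise_block N k. P idx) \<longleftrightarrow> (\<forall>i<N. \<forall>j<N. P (Inl (i, j, k))) \<and> (\<forall>i<N. P (Inr (i, k)))"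
  by (auto simp: noise_block_def)

lemma sir_noise_at_eq_iff:
  assumes "z \<in> noise_vals N"
  shows "sir_noise_at N u v k \<omega> = z \<longleftrightarrow>
           (\<forall>idx\<in>noise_block N k. sir_noise_family N u v idx \<omega> = noise_coord z idx)"
proof -
  obtain U V where z: "z = (U, V)" and U: "length U = N" "\<forall>i<N. length (U ! i) = N"
    and V: "length V = N"
    using assms by (cases z) (auto simp: noise_vals_def)
  have "sir_noise_at N u v k \<omega> = z \<longleftrightarrow>
          (\<forall>i<N. \<forall>j<N. u i k \<omega> j = U ! i ! j) \<and> (\<forall>i<N. v i k \<omega> = V ! i)"
    using U V by (simp add: sir_noise_at_def z list_eq_iff_nth_eq)
  also have "\<dots> \<longleftrightarrow> (\<forall>idx\<in>noise_block N k. sir_noise_family N u v idx \<omega> = noise_coord z idx)"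
    unfolding ball_noise_block by (simp add: sir_noise_family_def noise_coord_def z)
  finally show ?thesis .
qed

lemma measure_sir_noise_at:
  assumes noise: "sir_noise M N \<alpha> \<beta> u v" and "N > 0" and z: "z \<in> noise_vals N"
  shows "measure M {\<omega> \<in> space M. sir_noise_at N u v k \<omega> = z}
       = (\<Prod>idx\<in>noise_block N k. two_point_mass (noise_param \<alpha> \<beta> idx) (noise_coord z idx))"
proof -
  interpret prob_space M
    using noise by (simp add: sir_noise_def)
  have indep: "indep_vars (\<lambda>_. count_space UNIV) (sir_noise_family N u v) (sir_noise_index N)"
    using noise by (simp add: sir_noise_def)
  have ne: "noise_block N k \<noteq> {}"
    using \<open>N > 0\<close> by (metis empty_iff mem_noise_block(2))
  then have "{\<omega> \<in> space M. sir_noise_at N u v k \<omega> = z}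
      = (\<Inter>idx\<in>noise_block N k. sir_noise_family N u v idx -` {noise_coord z idx} \<inter> space M)"
    by (auto simp: sir_noise_at_eq_iff[OF z])
  also have "prob \<dots> = (\<Prod>idx\<in>noise_block N k. prob (sir_noise_family N u v idx -` {noise_coord z idx} \<inter> space M))"
    using ne by (intro indep_varsD[OF indep] finite_noise_block noise_block_subset) auto
  also have "\<dots> = (\<Prod>idx\<in>noise_block N k. two_point_mass (noise_param \<alpha> \<beta> idx) (noise_coord z idx))"
  proof (rule prod.cong)
    fix idx assume idx: "idx \<in> noise_block N k"
    have "sir_noise_family N u v idx -` {noise_coord z idx} \<inter> space M
        = {\<omega> \<in> space M. sir_noise_family N u v idx \<omega> = noise_coord z idx}"
      by auto
    then show "prob (sir_noise_family N u v idx -` {noise_coord z idx} \<inter> space M)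
             = two_point_mass (noise_param \<alpha> \<beta> idx) (noise_coord z idx)"
      using measure_sir_noise_family[OF noise subsetD[OF noise_block_subset idx] noise_coord_mem[OF z idx]]
      by simp
  qed simp
  finally show ?thesis .
qed

lemma prod_noise_block_time_invariant:
  "(\<Prod>idx\<in>noise_block N k. two_point_mass (noise_param \<alpha> \<beta> idx) (noise_coord z idx))
 = (\<Prod>idx\<in>noise_block N 0. two_point_mass (noise_param \<alpha> \<beta> idx) (noise_coord z idx))"
proof -
  define retime :: "nat \<Rightarrow> (nat \<times> nat \<times> nat) + (nat \<times> nat) \<Rightarrow> (nat \<times> nat \<times> nat) + (nat \<times> nat)"
    where "retime t idx = (case idx of Inl (i, j, _) \<Rightarrow> Inl (i, j, t) | Inr (i, _) \<Rightarrow> Inr (i, t))" for t idx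
  have "bij_betw (retime k) (noise_block N 0) (noise_block N k)"
    by (rule bij_betw_byWitness[where f' = "retime 0"]) (auto simp: noise_block_def retime_def)
  moreover have "noise_param \<alpha> \<beta> (retime k idx) = noise_param \<alpha> \<beta> idx"
    and "noise_coord z (retime k idx) = noise_coord z idx" for idx
    by (auto simp: retime_def noise_param_def noise_coord_def split: sum.splits)
  ultimately show ?thesis
    by (simp add: prod.reindex_bij_betw[symmetric])
qed

lemma measure_sir_noise_at_time_invariant:
  assumes noise: "sir_noise M N \<alpha> \<beta> u v"
  shows "measure M {\<omega> \<in> space M. sir_noise_at N u v k \<omega> = z}
       = measure M {\<omega> \<in> space M. sir_noise_at N u v 0 \<omega> = z}"
proof (cases "N > 0 \<and> z \<in> noise_vals N")
  case True
  then show ?thesis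
    using measure_sir_noise_at[OF noise] prod_noise_block_time_invariant by simp
next
  case False
  then consider "N = 0" | "z \<notin> noise_vals N" by auto
  then show ?thesis
  proof cases
    case 1
    then show ?thesis by (simp add: sir_noise_at_def)
  next
    case 2
    then have "{\<omega> \<in> space M. sir_noise_at N u v t \<omega> = z} = {}" for t
      using sir_noise_at_in_noise_vals[OF noise] by blast
    then show ?thesis by (simp only:)
  qed
qed

lemma indep_vars_sir_noise_at:
  assumes noise: "sir_noise M N \<alpha> \<beta> u v"
  shows "prob_space.indep_vars M (\<lambda>_. count_space UNIV) (sir_noise_at N u v) UNIV"
proof -
  interpret prob_space M
    using noise by (simp add: sir_noise_def)
  define block_value :: "nat \<Rightarrow> ((nat \<times> nat \<times> nat) + (nat \<times> nat) \<Rightarrow> nat) \<Rightarrow> nat list list \<times> nat list"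
    where "block_value k f =
      (map (\<lambda>i. map (\<lambda>j. f (Inl (i, j, k))) [0..<N]) [0..<N], map (\<lambda>i. f (Inr (i, k))) [0..<N])" for k f
  have "indep_vars (\<lambda>_. count_space UNIV) (sir_noise_family N u v) (sir_noise_index N)"
    using noise by (simp add: sir_noise_def)
  then have "indep_vars (\<lambda>k. PiM (noise_block N k) (\<lambda>_. count_space UNIV))
      (\<lambda>k \<omega>. restrict (\<lambda>idx. sir_noise_family N u v idx \<omega>) (noise_block N k)) UNIV"
    by (rule indep_vars_restrict[OF _ noise_block_subset]) (auto simp: disjoint_family_on_def noise_block_def)
  then have "indep_vars (\<lambda>_. count_space UNIV)
      (\<lambda>k \<omega>. block_value k (restrict (\<lambda>idx. sir_noise_family N u v idx \<omega>) (noise_block N k))) UNIV"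
    by (rule indep_vars_compose2) (simp add: count_space_PiM_finite finite_noise_block)
  moreover have "block_value k (restrict (\<lambda>idx. sir_noise_family N u v idx \<omega>) (noise_block N k))
      = sir_noise_at N u v k \<omega>" for k \<omega>
    by (auto simp: block_value_def sir_noise_at_def sir_noise_family_def intro!: map_cong)
  ultimately show ?thesis
    by simp
qed

lemma stoch_digraph_sir_noise_code:
  assumes noise: "sir_noise M N \<alpha> \<beta> u v" and "inj c" and "\<forall>s. E s \<subseteq> {..<n} \<times> {..<n}"
  shows "stoch_digraph M n (Suc (Max (c ` noise_vals N))) E
           (\<lambda>s. measure M {\<omega> \<in> space M. c (sir_noise_at N u v 0 \<omega>) = s})
           (\<lambda>k \<omega>. c (sir_noise_at N u v k \<omega>))"
  unfolding stoch_digraph_def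
proof (intro conjI allI ballI impI)
  show "prob_space M"
    using noise by (simp add: sir_noise_def)
  then interpret prob_space M .
  show "E s \<subseteq> {..<n} \<times> {..<n}" for s
    using assms(3) by blast
  show "c (sir_noise_at N u v k \<omega>) < Suc (Max (c ` noise_vals N))" if "\<omega> \<in> space M" for k \<omega>
    using sir_noise_at_in_noise_vals[OF noise that] finite_noise_vals by (simp add: le_imp_less_Suc)
  show "indep_vars (\<lambda>_. count_space UNIV) (\<lambda>k \<omega>. c (sir_noise_at N u v k \<omega>)) UNIV"
    using indep_vars_sir_noise_at[OF noise] by (rule indep_vars_compose2) simp
  show "prob {\<omega> \<in> space M. c (sir_noise_at N u v k \<omega>) = s}
      = prob {\<omega> \<in> space M. c (sir_noise_at N u v 0 \<omega>) = s}" for k s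
  proof (cases "s \<in> range c")
    case True
    then obtain z where "s = c z" by blast
    then have "{\<omega> \<in> space M. c (sir_noise_at N u v t \<omega>) = s} = {\<omega> \<in> space M. sir_noise_at N u v t \<omega> = z}" for t
      using \<open>inj c\<close> by (auto dest: injD)
    then show ?thesis
      using measure_sir_noise_at_time_invariant[OF noise] by simp
  next
    case False
    then have "{\<omega> \<in> space M. c (sir_noise_at N u v t \<omega>) = s} = {}" for t
      by auto
    then show ?thesis by (simp only:)
  qed
qed

theorem theorem3:
  fixes M :: "'a measure" and N \<kappa> :: nat and W :: "(nat \<times> nat) set" and \<alpha> \<beta> :: real
    and u :: "nat \<Rightarrow> nat \<Rightarrow> 'a \<Rightarrow> nat \<Rightarrow> nat" and v :: "nat \<Rightarrow> nat \<Rightarrow> 'a \<Rightarrow> nat"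
  assumes "W \<subseteq> {..<\<kappa>} \<times> {..<\<kappa>}"
    and "0 \<le> \<alpha>" and "\<alpha> \<le> 1" and "0 \<le> \<beta>" and "\<beta> \<le> 1"
    and "sir_noise M N \<alpha> \<beta> u v"
  shows "\<exists>(n::nat) (h::nat) (E :: nat \<Rightarrow> (nat \<times> nat) set) (\<mu> :: nat \<Rightarrow> real) (w :: nat \<Rightarrow> 'a \<Rightarrow> nat)
            (c :: nat list list \<times> nat list \<Rightarrow> nat) (enc :: nat list \<times> nat list \<Rightarrow> nat).
           stoch_digraph M n h E \<mu> w \<and>
           inj_on c (noise_vals N) \<and>
           (\<forall>k. \<forall>\<omega>\<in>space M. w k \<omega> = c (sir_noise_at N u v k \<omega>)) \<and>
           bij_betw enc (sir_states N \<kappa>) {..<n} \<and>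
           (\<forall>x\<in>sir_states N \<kappa>.
              bij_betw (\<lambda>X k \<omega>. if \<omega> \<in> space M then enc (X k \<omega>) else undefined)
                (sir_traj M N W u v x) (sd_paths M E w (enc x)))"
proof -
  note noise = assms(6)
  let ?S = "sir_states N \<kappa>"
  obtain enc where enc: "bij_betw enc ?S {..<card ?S}"
    using ex_bij_betw_finite_nat[OF finite_sir_states] by (metis atLeast0LessThan)
  let ?E = "driven_edges ?S enc to_nat (sir_step W N)"
  interpret coded_driven_system M ?S enc to_nat "sir_step W N" "sir_noise_at N u v"
    using enc sir_step_in_sir_states[OF assms(1) sir_noise_at_in_noise_vals[OF noise]]
    by unfold_locales (auto simp: bij_betw_def)
  have "\<forall>s. ?E s \<subseteq> {..<card ?S} \<times> {..<card ?S}"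
    using bij_betwE[OF enc] unfolding driven_edges_def by blast
  note digraph = stoch_digraph_sir_noise_code[OF noise inj_to_nat this]
  have "bij_betw (\<lambda>X k \<omega>. if \<omega> \<in> space M then enc (X k \<omega>) else undefined)
          (sir_traj M N W u v x) (sd_paths M ?E (\<lambda>k \<omega>. to_nat (sir_noise_at N u v k \<omega>)) (enc x))"
    if "x \<in> ?S" for x
    using bij_betw_encode[OF that]
    by (simp add: sir_traj_eq_driven_traj[OF that] sd_paths_eq_driven_traj encode_def[abs_def])
  with digraph enc show ?thesis
    by blast
qed

end
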